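(* The points $P=(\theta,1)$ and $Q=(\theta,0)$ are saddle fixed points of $F$ of indices $u$ and $u+1$, respectively, that are related by a heterodimensional cycle, i.e. $W^s(P,F)\cap W^u(Q,F)\neq\emptyset$ and $W^u(P,F)\cap W^s(Q,F)\neq\emptyset$.
   Context: Let $f_0,f_1\colon[0,1]\to[0,1]$ be $C^1$ injective maps such that: (F0.i) $f_0$ is increasing and has exactly two fixed points $0$ and $1$, both hyperbolic, with $f_0'(0)=\beta>1$, $f_0'(1)=\lambda\in(0,1)$ and $\lambda\le f_0'(x)\le\beta$ for all $x\in[0,1]$; (F0.ii) there are intervals $I_0=[a_0,b_0]\subset(0,1)$ with $b_0=f_0(a_0)$ and $I_1=[a_1,b_1]$ with $b_1=f_0(a_1)$, and numbers $\alpha>1$, $N\ge1$, with $f_0^N(I_0)=I_1$ and $\lambda\,(f_0^N)'(x)>\alpha$ for all $x\in I_0$; moreover $f_0$ is expanding on $[0,b_0]$ and contracting on $[a_1,1]$; (F1.i) $f_1$ is decreasing with $\gamma'=\min_{[0,1]}|f_1'|\le\gamma=\max_{[0,1]}|f_1'|<1$; (F1.ii) $|f_1'(x)|\ge\bar\alpha>1/\alpha$ for all $x\in[f_1^2(a_1),a_1]$; (F01) $f_1(1)=0$, $f_1([a_1,1])\subset[0,a_0)$, and $[0,f_0^{-2}(b_0))\subset f_1([0,1])$. Setting: $s,u\ge1$ integers, $\widehat{\mathbf C}=[0,1]^{s+u}$, $\Sigma_2=\{0,1\}^{\mathbb Z}$ with shift $\sigma$; $\Phi$ is a diffeomorphism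 of $\mathbb R^{s+u}$ with a horseshoe $\Gamma\subset\widehat{\mathbf C}$ with $s$-dimensional stable and $u$-dimensional unstable bundles, conjugate to $\sigma$ via $\varpi\colon\Gamma\to\Sigma_2$; sub-cubes $\widehat{\mathbf C}_0,\widehat{\mathbf C}_1$ are mapped affinely and in a Markovian way by $\Phi$ into $\widehat{\mathbf C}$, $\widehat{\mathbf C}_i$ containing the points $X\in\Gamma$ with $(\varpi(X))_0=i$; $\theta=\varpi^{-1}(0^{\mathbb Z})=0^{s+u}$, $W^s_{\rm loc}(\theta,\Phi)=[0,1]^s\times\{0^u\}$, $W^u_{\rm loc}(\theta,\Phi)=\{0^s\}\times[0,1]^u$. $\mathbf C=\widehat{\mathbf C}\times[0,1]$, $F(\widehat x,x)=(\Phi(\widehat x),f_i(x))$ if $\widehat x\in\widehat{\mathbf C}_i$. The expansion of $\Phi$ along its unstable direction is stronger than $\beta$ and its contraction along its stable direction is stronger than $\min\{\lambda,\gamma'\}$, so the splitting $E^{ss}\oplus E^c\oplus E^{uu}$ is dominated. The index of a saddle is the dimension of its unstable direction; $W^s(\cdot,F)$, $W^u(\cdot,F)$ denote stable and unstable manifolds of orbits. *)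

theory Defs
  imports "HOL-Analysis.Analysis"
begin

text \<open>Forward stable set of a point p for a map f whose orbits are required to
  stay in the domain D of definition of f.\<close>
definition stable_set :: "('a::topological_space \<Rightarrow> 'a) \<Rightarrow> 'a set \<Rightarrow> 'a \<Rightarrow> 'a set" where
  "stable_set f D p = {x. (\<forall>n. (f ^^ n) x \<in> D) \<and> (\<lambda>n. (f ^^ n) x) \<longlonglongrightarrow> p}"

definition unstable_set :: "('a::topological_space \<Rightarrow> 'a) \<Rightarrow> 'a set \<Rightarrow> 'a \<Rightarrow> 'a set" where
  "unstable_set f D p = {x. \<exists>\<xi>::nat \<Rightarrow> 'a. \<xi> 0 = x \<and> (\<forall>n. \<xi> n \<in> D \<and> f (\<xi> (Suc n)) = \<xi> n)
                              \<and> \<xi> \<longlonglongrightarrow> p}"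

definition local_stable_manifold :: "('a::topological_space \<Rightarrow> 'a) \<Rightarrow> 'a set \<Rightarrow> 'a \<Rightarrow> 'a set" where
  "local_stable_manifold f K p = connected_component_set (stable_set f K p) p"

definition local_unstable_manifold :: "('a::topological_space \<Rightarrow> 'a) \<Rightarrow> 'a set \<Rightarrow> 'a \<Rightarrow> 'a set" where
  "local_unstable_manifold f K p = connected_component_set (unstable_set f K p) p"

definition hyperbolic_linear_index :: "('a::euclidean_space \<Rightarrow> 'a) \<Rightarrow> nat \<Rightarrow> bool" where
  "hyperbolic_linear_index L k \<longleftrightarrow> linear L \<and>
     (\<exists>Es Eu. subspace Es \<and> subspace Eu \<and> Es \<inter> Eu = {0} \<and> (\<forall>v. \<exists>a\<in>Es. \<exists>b\<in>Eu. v = a + b)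
        \<and> L ` Es \<subseteq> Es \<and> L ` Eu \<subseteq> Eu \<and> dim Eu = k
        \<and> (\<exists>c \<mu>. c > 0 \<and> 0 < \<mu> \<and> \<mu> < 1 \<and> (\<forall>n. \<forall>v\<in>Es. norm ((L ^^ n) v) \<le> c * \<mu> ^ n * norm v))
        \<and> (\<exists>c \<mu>. c > 0 \<and> 0 < \<mu> \<and> \<mu> < 1 \<and> (\<forall>n. \<forall>v\<in>Eu. norm v \<le> c * \<mu> ^ n * norm ((L ^^ n) v))))"

definition saddle_of_index :: "('a::euclidean_space \<Rightarrow> 'a) \<Rightarrow> 'a set \<Rightarrow> 'a \<Rightarrow> nat \<Rightarrow> bool" where
  "saddle_of_index f D p k \<longleftrightarrow> p \<in> D \<and> f p = p \<and> 0 < k \<and> k < DIM('a) \<and>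
     (\<exists>L. (f has_derivative L) (at p within D) \<and> hyperbolic_linear_index L k)"

definition Sigma2 :: "(int \<Rightarrow> nat) set" where
  "Sigma2 = {\<omega>. \<forall>n. \<omega> n \<in> {0, 1}}"

definition shift :: "(int \<Rightarrow> nat) \<Rightarrow> (int \<Rightarrow> nat)" where
  "shift \<omega> = (\<lambda>n. \<omega> (n + 1))"

end

theory Submission
  imports Defs
begin

(*
  Over the fixed point \<theta> = 0 of the horseshoe, F acts on the fibre {\<theta>} \<times> [0,1] by f0,
  whose fixed points 0 and 1 give Q and P. Near the fibre F is the product of the linear part
  of \<Phi> on the cube \<open>Chat 0\<close> with f0, so its derivative at (\<theta>, t) is block diagonal with
  centre entry f0'(t); by domination the contracting centre entry \<lambda> joins the stable bundle at P
  and the expanding entry \<beta> joins the unstable bundle at Q, so the indices are u and u + 1.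

  Inside the fibre, f0 has no fixed point in (0,1) and expands at 0, so every interior point
  moves up: its forward orbit tends to 1 and it has a backward orbit tending to 0, which gives
  W^s(P) \<inter> W^u(Q) \<noteq> {}. For the other intersection, the Markov property yields a point
  X = (0, y) of \<open>Chat 1\<close> on W^u_loc(\<theta>) with \<Phi> X on W^s_loc(\<theta>). The backward orbit of X stays
  in W^u_loc(\<theta>) \<inter> \<open>Chat 0\<close>, where the fibre coordinate 1 is fixed by f0, so (X, 1) \<in> W^u(P);
  and f1 1 = 0 sends (X, 1) to (\<Phi> X, 0), whose forward orbit stays in W^s_loc(\<theta>) \<times> {0},
  so (X, 1) \<in> W^s(Q).
*)

lemma norm_funpow_le:
  fixes T :: "'a::real_normed_vector \<Rightarrow> 'a"
  assumes "\<And>x. norm (T x) \<le> m * norm x" "0 \<le> m"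
  shows "norm ((T ^^ n) x) \<le> m ^ n * norm x"
proof (induction n)
  case (Suc n)
  have "norm ((T ^^ Suc n) x) \<le> m * norm ((T ^^ n) x)" using assms(1) by simp
  also have "\<dots> \<le> m * (m ^ n * norm x)" using Suc assms(2) by (simp add: mult_left_mono)
  finally show ?case by (simp add: mult.assoc)
qed simp

lemma norm_funpow_ge:
  fixes T :: "'a::real_normed_vector \<Rightarrow> 'a"
  assumes "\<And>x. m * norm x \<le> norm (T x)" "0 \<le> m"
  shows "m ^ n * norm x \<le> norm ((T ^^ n) x)"
proof (induction n)
  case (Suc n)
  have "m * (m ^ n * norm x) \<le> m * norm ((T ^^ n) x)" using Suc assms(2) by (simp add: mult_left_mono)
  also have "\<dots> \<le> norm ((T ^^ Suc n) x)" using assms(1) by simp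
  finally show ?case by (simp add: mult.assoc)
qed simp

lemma funpow_linear_0:
  fixes T :: "'a::real_vector \<Rightarrow> 'a"
  assumes "linear T"
  shows "(T ^^ n) 0 = 0"
  using assms by (induction n) (auto simp: linear_0)

lemma norm_Pair_mono: "norm a \<le> norm a' \<Longrightarrow> norm b \<le> norm b' \<Longrightarrow> norm (a, b) \<le> norm (a', b')"
  unfolding norm_Pair by (intro real_sqrt_le_mono add_mono power_mono) auto

lemma hyperbolic_linear_indexI:
  assumes "linear L" "subspace Es" "subspace Eu" "Es \<inter> Eu = {0}" "\<And>v. \<exists>a\<in>Es. \<exists>b\<in>Eu. v = a + b"
    and "L ` Es \<subseteq> Es" "L ` Eu \<subseteq> Eu" "dim Eu = k"
    and "0 < \<mu>" "\<mu> < 1" "\<And>n v. v \<in> Es \<Longrightarrow> norm ((L ^^ n) v) \<le> \<mu> ^ n * norm v"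
    and "0 < \<nu>" "\<nu> < 1" "\<And>n v. v \<in> Eu \<Longrightarrow> norm v \<le> \<nu> ^ n * norm ((L ^^ n) v)"
  shows "hyperbolic_linear_index L k"
proof -
  have stable: "\<exists>c \<mu>. c > 0 \<and> 0 < \<mu> \<and> \<mu> < 1 \<and> (\<forall>n. \<forall>v\<in>Es. norm ((L ^^ n) v) \<le> c * \<mu> ^ n * norm v)"
    using assms by (intro exI[of _ 1] exI[of _ \<mu>]) auto
  have unstable: "\<exists>c \<nu>. c > 0 \<and> 0 < \<nu> \<and> \<nu> < 1 \<and> (\<forall>n. \<forall>v\<in>Eu. norm v \<le> c * \<nu> ^ n * norm ((L ^^ n) v))"
    using assms by (intro exI[of _ 1] exI[of _ \<nu>]) auto
  show ?thesis
    unfolding hyperbolic_linear_index_def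
    using assms(1-8) stable unstable by (intro conjI exI[of _ Es] exI[of _ Eu]) simp_all
qed

definition block_map :: "('a \<Rightarrow> 'a) \<Rightarrow> ('b \<Rightarrow> 'b) \<Rightarrow> real \<Rightarrow> ('a \<times> 'b) \<times> real \<Rightarrow> ('a \<times> 'b) \<times> real"
  where "block_map A B k v = ((A (fst (fst v)), B (snd (fst v))), k * snd v)"

lemma funpow_block_map: "(block_map A B k ^^ n) ((x, y), t) = (((A ^^ n) x, (B ^^ n) y), k ^ n * t)"
  by (induction n) (auto simp: block_map_def)

lemma linear_block_map: "linear A \<Longrightarrow> linear B \<Longrightarrow> linear (block_map A B k)"
  unfolding linear_iff block_map_def by (auto simp: algebra_simps)

lemma dim_range_linear_inj:
  fixes g :: "'b::euclidean_space \<Rightarrow> 'c::euclidean_space"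
  assumes "linear g" "inj g"
  shows "dim (range g) = DIM('b)"
  using dim_image_eq[OF assms(1), of UNIV] assms(2) by (simp add: inj_on_def)

lemma hyperbolic_block_map_center_stable:
  fixes A :: "'a::euclidean_space \<Rightarrow> 'a" and B :: "'b::euclidean_space \<Rightarrow> 'b"
  assumes "linear A" "linear B"
    and A: "\<And>x. norm (A x) \<le> ms * norm x" and B: "\<And>y. mu * norm y \<le> norm (B y)"
    and "0 < ms" "ms < k" "k < 1" "1 < mu"
  shows "hyperbolic_linear_index (block_map A B k) DIM('b)"
proof -
  define Es where "Es = {v::('a \<times> 'b) \<times> real. snd (fst v) = 0}"
  define Eu where "Eu = {v::('a \<times> 'b) \<times> real. fst (fst v) = 0 \<and> snd v = 0}"
  show ?thesis
  proof (rule hyperbolic_linear_indexI[where Es = Es and Eu = Eu and \<mu> = k and \<nu> = "1 / mu"])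
    show "\<exists>a\<in>Es. \<exists>b\<in>Eu. v = a + b" for v
      by (intro bexI[of _ "((fst (fst v), 0), snd v)"] bexI[of _ "((0, snd (fst v)), 0)"])
         (auto simp: Es_def Eu_def prod_eq_iff)
    show "Es \<inter> Eu = {0}" by (auto simp: Es_def Eu_def zero_prod_def)
    have "Eu = range (\<lambda>y. ((0::'a, y), 0::real))"
      by (auto simp: Eu_def image_iff prod_eq_iff)
    then show "dim Eu = DIM('b)"
      by (simp only:) (rule dim_range_linear_inj, auto simp: linear_iff inj_def)
    show "norm ((block_map A B k ^^ n) v) \<le> k ^ n * norm v" if "v \<in> Es" for n v
    proof -
      obtain x t where v: "v = ((x, 0), t)" using \<open>v \<in> Es\<close> by (auto simp: Es_def prod_eq_iff)
      have "norm ((A ^^ n) x) \<le> ms ^ n * norm x" using norm_funpow_le[OF A] \<open>0 < ms\<close> by simp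
      also have "\<dots> \<le> k ^ n * norm x"
        using \<open>0 < ms\<close> \<open>ms < k\<close> by (intro mult_right_mono power_mono) auto
      finally have "norm (((A ^^ n) x, 0::'b), k ^ n * t) \<le> norm ((k ^ n *\<^sub>R x, 0::'b), k ^ n * t)"
        using \<open>0 < ms\<close> \<open>ms < k\<close> by (intro norm_Pair_mono) auto
      also have "\<dots> = norm (k ^ n *\<^sub>R v)" by (simp add: v)
      also have "\<dots> = k ^ n * norm v" using \<open>0 < ms\<close> \<open>ms < k\<close> by simp
      finally show ?thesis by (simp add: v funpow_block_map funpow_linear_0 \<open>linear B\<close>)
    qed
    show "norm v \<le> (1 / mu) ^ n * norm ((block_map A B k ^^ n) v)" if "v \<in> Eu" for n v
    proof -
      obtain y where v: "v = ((0, y), 0)" using \<open>v \<in> Eu\<close> by (auto simp: Eu_def prod_eq_iff)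
      have "mu ^ n * norm y \<le> norm ((B ^^ n) y)" using norm_funpow_ge[OF B] \<open>1 < mu\<close> by simp
      then show ?thesis
        using \<open>1 < mu\<close> \<open>linear A\<close>
        by (simp add: v funpow_block_map funpow_linear_0 norm_Pair field_simps power_divide)
    qed
    show "subspace Es" "subspace Eu" by (auto simp: subspace_def Es_def Eu_def)
    show "block_map A B k ` Es \<subseteq> Es" "block_map A B k ` Eu \<subseteq> Eu"
      using assms(1,2) by (auto simp: Es_def Eu_def block_map_def linear_0)
  qed (use assms in \<open>auto simp: linear_block_map\<close>)
qed

lemma hyperbolic_block_map_center_unstable:
  fixes A :: "'a::euclidean_space \<Rightarrow> 'a" and B :: "'b::euclidean_space \<Rightarrow> 'b"
  assumes "linear A" "linear B"
    and A: "\<And>x. norm (A x) \<le> ms * norm x" and B: "\<And>y. mu * norm y \<le> norm (B y)"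
    and "0 < ms" "ms < 1" "1 < k" "k < mu"
  shows "hyperbolic_linear_index (block_map A B k) (DIM('b) + 1)"
proof -
  define Es where "Es = {v::('a \<times> 'b) \<times> real. snd (fst v) = 0 \<and> snd v = 0}"
  define Eu where "Eu = {v::('a \<times> 'b) \<times> real. fst (fst v) = 0}"
  have dim_Eu: "dim Eu = DIM('b) + 1"
  proof -
    have "Eu = range (\<lambda>w::'b \<times> real. ((0::'a, fst w), snd w))"
      by (auto simp: Eu_def image_iff prod_eq_iff)
    also have "dim \<dots> = DIM('b \<times> real)"
      by (rule dim_range_linear_inj) (auto simp: linear_iff inj_def prod_eq_iff)
    finally show ?thesis by simp
  qed
  show ?thesis
  proof (rule hyperbolic_linear_indexI[where Es = Es and Eu = Eu and \<mu> = ms and \<nu> = "1 / k"])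
    show "Es \<inter> Eu = {0}" by (auto simp: Es_def Eu_def zero_prod_def)
    show "\<exists>a\<in>Es. \<exists>b\<in>Eu. v = a + b" for v
      by (intro bexI[of _ "((fst (fst v), 0), 0)"] bexI[of _ "((0, snd (fst v)), snd v)"])
         (auto simp: Es_def Eu_def prod_eq_iff)
    show "norm ((block_map A B k ^^ n) v) \<le> ms ^ n * norm v" if "v \<in> Es" for n v
    proof -
      obtain x where v: "v = ((x, 0), 0)" using \<open>v \<in> Es\<close> by (auto simp: Es_def prod_eq_iff)
      have "(block_map A B k ^^ n) v = (((A ^^ n) x, 0), 0)"
        by (simp add: v funpow_block_map funpow_linear_0 \<open>linear B\<close>)
      then show ?thesis
        using norm_funpow_le[OF A, of n x] \<open>0 < ms\<close> by (simp add: v norm_Pair)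
    qed
    show "norm v \<le> (1 / k) ^ n * norm ((block_map A B k ^^ n) v)" if "v \<in> Eu" for n v
    proof -
      obtain y t where v: "v = ((0, y), t)" using \<open>v \<in> Eu\<close> by (auto simp: Eu_def prod_eq_iff)
      have "k ^ n * norm y \<le> mu ^ n * norm y"
        using \<open>1 < k\<close> \<open>k < mu\<close> by (intro mult_right_mono power_mono) auto
      also have "\<dots> \<le> norm ((B ^^ n) y)" using norm_funpow_ge[OF B] \<open>1 < k\<close> \<open>k < mu\<close> by simp
      finally have le: "norm ((0::'a, k ^ n *\<^sub>R y), k ^ n * t) \<le> norm ((0::'a, (B ^^ n) y), k ^ n * t)"
        using \<open>1 < k\<close> by (intro norm_Pair_mono) auto
      have "k ^ n * norm v = norm (k ^ n *\<^sub>R v)" using \<open>1 < k\<close> by simp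
      also have "\<dots> = norm ((0::'a, k ^ n *\<^sub>R y), k ^ n * t)" by (simp add: v)
      also have "\<dots> \<le> norm ((0::'a, (B ^^ n) y), k ^ n * t)" by (rule le)
      also have "\<dots> = norm ((block_map A B k ^^ n) v)"
        by (simp add: v funpow_block_map funpow_linear_0 \<open>linear A\<close>)
      finally have "k ^ n * norm v \<le> norm ((block_map A B k ^^ n) v)" .
      then show ?thesis using \<open>1 < k\<close> by (simp add: field_simps power_divide)
    qed
    show "subspace Es" "subspace Eu" by (auto simp: subspace_def Es_def Eu_def)
    show "block_map A B k ` Es \<subseteq> Es" "block_map A B k ` Eu \<subseteq> Eu"
      using assms(1,2) by (auto simp: Es_def Eu_def block_map_def linear_0)
  qed (use assms dim_Eu in \<open>auto simp: linear_block_map\<close>)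
qed

lemma fixed_point_of_orbit_limit:
  fixes f :: "'a::t2_space \<Rightarrow> 'a"
  assumes "continuous_on S f" "closed S" "\<And>n. g n \<in> S" "g \<longlonglongrightarrow> L" "(\<lambda>n. f (g n)) \<longlonglongrightarrow> L"
  shows "f L = L"
proof -
  have "L \<in> S" by (rule closed_sequentially[OF assms(2)]) (use assms(3,4) in auto)
  have "(\<lambda>n. f (g n)) \<longlonglongrightarrow> f L"
    by (rule continuous_on_tendsto_compose[OF assms(1,4) \<open>L \<in> S\<close>]) (simp add: assms(3))
  from LIMSEQ_unique[OF this assms(5)] show ?thesis .
qed

lemma interval_map_above_diagonal:
  fixes f :: "real \<Rightarrow> real"
  assumes cont: "continuous_on {0..1} f"
    and fixed: "{x\<in>{0..1}. f x = x} = {0, 1}"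
    and deriv: "(f has_real_derivative b) (at 0 within {0..1})" and "1 < b"
    and z: "0 < z" "z < 1"
  shows "z < f z"
proof -
  have no_fixed: "f t \<noteq> t" if "0 < t" "t < 1" for t
  proof
    assume "f t = t"
    then have "t \<in> {x\<in>{0..1}. f x = x}" using that by auto
    then have "t \<in> {0, 1}" by (simp only: fixed)
    then show False using that by auto
  qed
  have "((\<lambda>y. (f y - f 0) / (y - 0)) \<longlongrightarrow> b) (at 0 within {0..1})"
    using deriv by (simp add: has_field_derivative_iff)
  then have "\<forall>\<^sub>F y in at 0 within {0..1}. 1 < (f y - f 0) / (y - 0)"
    using \<open>1 < b\<close> by (rule order_tendstoD(1))
  then obtain d where "0 < d"
    and d: "\<And>y. y \<in> {0..1} \<Longrightarrow> y \<noteq> 0 \<Longrightarrow> dist y 0 < d \<Longrightarrow> 1 < (f y - f 0) / (y - 0)"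
    unfolding eventually_at by blast
  define y where "y = min (d / 2) (1 / 2)"
  have y: "0 < y" "y < 1" using \<open>0 < d\<close> by (auto simp: y_def)
  have "0 \<in> {x\<in>{0..1}. f x = x}" unfolding fixed by simp
  then have "f 0 = 0" by simp
  have "1 < (f y - f 0) / y" using d[of y] \<open>0 < d\<close> y by (auto simp: y_def)
  then have "y < f y" using y \<open>f 0 = 0\<close> by (auto simp: field_simps)
  show "z < f z"
  proof (rule ccontr)
    assume "\<not> z < f z"
    have cont_diff: "continuous_on {min z y..max z y} (\<lambda>t. f t - t)"
      using y z by (intro continuous_intros continuous_on_subset[OF cont]) auto
    obtain t where "min z y \<le> t" "t \<le> max z y" "f t - t = 0"
      using IVT'[OF _ _ _ cont_diff, of 0] IVT2'[OF _ _ _ cont_diff, of 0] \<open>\<not> z < f z\<close> \<open>y < f y\<close>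
      by (cases "z \<le> y") (auto simp: min_def max_def)
    then show False using no_fixed[of t] y z by auto
  qed
qed

lemma forward_orbit_tendsto_one:
  fixes f :: "real \<Rightarrow> real"
  assumes cont: "continuous_on {0..1} f" and maps: "f ` {0..1} \<subseteq> {0..1}" and "f 1 = 1"
    and above: "\<And>z. 0 < z \<Longrightarrow> z < 1 \<Longrightarrow> z < f z"
    and x: "0 < x" "x \<le> 1"
  shows "(f ^^ n) x \<in> {x..1}" and "(\<lambda>n. (f ^^ n) x) \<longlonglongrightarrow> 1"
proof -
  have step: "f y \<in> {x..1} \<and> y \<le> f y" if "y \<in> {x..1}" for y
  proof (cases "y = 1")
    case False
    then have "y < f y" using above that x by auto
    moreover have "f y \<le> 1" using maps that x by (auto simp: image_subset_iff)
    ultimately show ?thesis using that by auto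
  qed (use \<open>f 1 = 1\<close> x in simp)
  show orbit: "(f ^^ n) x \<in> {x..1}" for n
    by (induction n) (use x step in auto)
  have orbit_unit: "(f ^^ n) x \<in> {0..1}" for n
    using orbit[of n] x by auto
  have "incseq (\<lambda>n. (f ^^ n) x)"
    using step orbit by (intro incseq_SucI) simp
  then obtain L where L: "(\<lambda>n. (f ^^ n) x) \<longlonglongrightarrow> L" "\<And>n. (f ^^ n) x \<le> L"
    using incseq_convergent[of _ 1] orbit by (metis atLeastAtMost_iff)
  have "L \<le> 1" using LIMSEQ_le_const2[OF L(1), of 1] orbit by auto
  have "x \<le> L" using L(2)[of 0] by simp
  have "f L = L"
    using cont orbit_unit L(1) LIMSEQ_Suc[OF L(1)]
    by (intro fixed_point_of_orbit_limit[of "{0..1}" f "\<lambda>n. (f ^^ n) x"]) auto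
  then have "L = 1" using above[of L] \<open>L \<le> 1\<close> \<open>x \<le> L\<close> x by (cases "L = 1") auto
  then show "(\<lambda>n. (f ^^ n) x) \<longlonglongrightarrow> 1" using L(1) by simp
qed

lemma backward_orbit_tendsto_zero:
  fixes f :: "real \<Rightarrow> real"
  assumes cont: "continuous_on {0..1} f" and "f 0 = 0"
    and above: "\<And>z. 0 < z \<Longrightarrow> z < 1 \<Longrightarrow> z < f z"
    and x: "0 < x" "x < 1"
  obtains g where "g 0 = x" "\<And>n. g n \<in> {0<..x}" "\<And>n. f (g (Suc n)) = g n" "g \<longlonglongrightarrow> 0"
proof -
  have "\<exists>w\<in>{0<..<z}. f w = z" if z: "0 < z" "z < 1" for z
  proof -
    obtain w where "0 \<le> w" "w \<le> z" "f w = z"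
      using IVT'[of f 0 z z] \<open>f 0 = 0\<close> above[OF z] z continuous_on_subset[OF cont, of "{0..z}"] by auto
    moreover have "w \<noteq> 0" "w \<noteq> z" using \<open>f w = z\<close> \<open>f 0 = 0\<close> above[OF z] z by auto
    ultimately show ?thesis by auto
  qed
  then obtain pre where pre: "\<And>z. 0 < z \<Longrightarrow> z < 1 \<Longrightarrow> pre z \<in> {0<..<z} \<and> f (pre z) = z"
    by metis
  define g where "g n = (pre ^^ n) x" for n
  have g: "g n \<in> {0<..x}" for n
  proof (induction n)
    case (Suc n)
    then show ?case using pre[of "g n"] x by (auto simp: g_def)
  qed (use x in \<open>simp add: g_def\<close>)
  have g_unit: "g n \<in> {0..1}" for n
    using g[of n] x by auto
  have g_Suc: "f (g (Suc n)) = g n" "g (Suc n) \<le> g n" for n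
    using pre[of "g n"] g[of n] x by (auto simp: g_def)
  have "decseq g" using g_Suc(2) by (intro decseq_SucI)
  then obtain M where M: "g \<longlonglongrightarrow> M" "\<And>n. M \<le> g n"
    using decseq_convergent[of g 0] g by (metis greaterThanAtMost_iff less_imp_le)
  have "0 \<le> M" using LIMSEQ_le_const[OF M(1), of 0] g by (auto intro: less_imp_le)
  have "M < 1" using M(2)[of 0] x by (simp add: g_def)
  have "f M = M"
    using cont g_unit LIMSEQ_Suc[OF M(1)] M(1) g_Suc(1)
    by (intro fixed_point_of_orbit_limit[of "{0..1}" f "\<lambda>n. g (Suc n)"]) auto
  then have "M = 0" using above[of M] \<open>0 \<le> M\<close> \<open>M < 1\<close> by (cases "M = 0") auto
  show ?thesis
  proof (rule that)
    show "g 0 = x" by (simp add: g_def)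
    show "g \<longlonglongrightarrow> 0" using M(1) \<open>M = 0\<close> by simp
  qed (use g g_Suc(1) in auto)
qed

lemma funpow_apply_eq_Suc: "(f ^^ n) (f x) = (f ^^ Suc n) x"
  by (simp add: funpow_swap1)

lemma stable_set_preimage:
  assumes "x \<in> D" "f x \<in> stable_set f D p"
  shows "x \<in> stable_set f D p"
proof -
  have "(f ^^ n) x \<in> D" for n
    using assms by (cases n) (auto simp: stable_set_def funpow_apply_eq_Suc simp del: funpow.simps)
  moreover have "(\<lambda>n. (f ^^ Suc n) x) \<longlonglongrightarrow> p"
    using assms(2) by (simp add: stable_set_def funpow_apply_eq_Suc del: funpow.simps)
  ultimately show ?thesis by (simp add: stable_set_def LIMSEQ_imp_Suc)
qed

lemma image_stable_set_subset: "f ` stable_set f D p \<subseteq> stable_set f D p"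
proof
  fix y assume "y \<in> f ` stable_set f D p"
  then obtain x where "x \<in> stable_set f D p" "y = f x" by blast
  then show "y \<in> stable_set f D p"
    unfolding stable_set_def
    by (auto simp: funpow_apply_eq_Suc simp del: funpow.simps intro: LIMSEQ_Suc)
qed

lemma inv_image_unstable_set_subset:
  assumes "inj f"
  shows "inv f ` unstable_set f D p \<subseteq> unstable_set f D p"
proof
  fix y assume "y \<in> inv f ` unstable_set f D p"
  then obtain x \<xi> where "y = inv f x" "\<xi> 0 = x" "\<forall>n. \<xi> n \<in> D \<and> f (\<xi> (Suc n)) = \<xi> n" "\<xi> \<longlonglongrightarrow> p"
    unfolding unstable_set_def by blast
  moreover have "inv f x = \<xi> 1" using calculation assms by (metis One_nat_def inv_f_f)
  ultimately show "y \<in> unstable_set f D p"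
    unfolding unstable_set_def
    by (intro CollectI exI[of _ "\<lambda>n. \<xi> (Suc n)"]) (auto intro: LIMSEQ_Suc)
qed

lemma unstable_set_funpow_inv_tendsto:
  assumes "inj f" "x \<in> unstable_set f D p"
  shows "(\<lambda>n. (inv f ^^ n) x) \<longlonglongrightarrow> p"
proof -
  obtain \<xi> where \<xi>: "\<xi> 0 = x" "\<And>n. f (\<xi> (Suc n)) = \<xi> n" "\<xi> \<longlonglongrightarrow> p"
    using assms(2) unfolding unstable_set_def by blast
  have "\<xi> (Suc n) = inv f (\<xi> n)" for n
    using \<xi>(2) assms(1) by (metis inv_f_f)
  then have "\<xi> n = (inv f ^^ n) x" for n
    by (induction n) (simp_all add: \<xi>(1))
  then have "\<xi> = (\<lambda>n. (inv f ^^ n) x)" by blast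
  then show ?thesis using \<xi>(3) by simp
qed

text \<open>The local invariant manifolds are connected components; invariance is inherited
  because the image of a connected set through the fixed point is again connected.\<close>

lemma image_local_stable_manifold_subset:
  assumes "continuous_on UNIV f" "f p = p"
  shows "f ` local_stable_manifold f K p \<subseteq> local_stable_manifold f K p"
proof (cases "p \<in> stable_set f K p")
  case True
  let ?W = "local_stable_manifold f K p"
  have "p \<in> ?W" using True by (simp add: local_stable_manifold_def connected_component_refl)
  then have "p \<in> f ` ?W" using assms(2) by (metis image_eqI)
  moreover have "connected (f ` ?W)"
    unfolding local_stable_manifold_def
    by (rule connected_continuous_image[OF continuous_on_subset[OF assms(1)] connected_connected_component]) simp
  moreover have "f ` ?W \<subseteq> stable_set f K p"
    using image_stable_set_subset connected_component_subset
    unfolding local_stable_manifold_def by blast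
  ultimately show ?thesis
    unfolding local_stable_manifold_def by (rule connected_component_maximal)
next
  case False
  then have "local_stable_manifold f K p = {}"
    unfolding local_stable_manifold_def by (rule connected_component_eq_empty[THEN iffD2])
  then show ?thesis by simp
qed

lemma inv_image_local_unstable_manifold_subset:
  assumes "inj f" "continuous_on UNIV (inv f)" "f p = p"
  shows "inv f ` local_unstable_manifold f K p \<subseteq> local_unstable_manifold f K p"
proof (cases "p \<in> unstable_set f K p")
  case True
  let ?W = "local_unstable_manifold f K p"
  have "p \<in> ?W" using True by (simp add: local_unstable_manifold_def connected_component_refl)
  moreover have "inv f p = p" using assms(1,3) by (metis inv_f_f)
  ultimately have "p \<in> inv f ` ?W" by (metis image_eqI)
  moreover have "connected (inv f ` ?W)"
    unfolding local_unstable_manifold_def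
    by (rule connected_continuous_image[OF continuous_on_subset[OF assms(2)] connected_connected_component]) simp
  moreover have "inv f ` ?W \<subseteq> unstable_set f K p"
    using inv_image_unstable_set_subset[OF assms(1)] connected_component_subset
    unfolding local_unstable_manifold_def by blast
  ultimately show ?thesis
    unfolding local_unstable_manifold_def by (rule connected_component_maximal)
next
  case False
  then have "local_unstable_manifold f K p = {}"
    unfolding local_unstable_manifold_def by (rule connected_component_eq_empty[THEN iffD2])
  then show ?thesis by simp
qed

lemma has_derivative_affine_skew_product:
  fixes A :: "'a::euclidean_space \<Rightarrow> 'a" and B :: "'b::euclidean_space \<Rightarrow> 'b" and f :: "real \<Rightarrow> real"
  assumes "linear A" "linear B"
    and f: "(f has_real_derivative k) (at t within T)" and "snd ` S \<subseteq> T"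
  shows "((\<lambda>v. ((A (fst (fst v)) + a, B (snd (fst v)) + b), f (snd v))) has_derivative block_map A B k)
           (at (X, t) within S)"
proof -
  have A: "bounded_linear (\<lambda>v::('a \<times> 'b) \<times> real. A (fst (fst v)))"
   and B: "bounded_linear (\<lambda>v::('a \<times> 'b) \<times> real. B (snd (fst v)))"
    using assms(1,2) unfolding linear_conv_bounded_linear[symmetric] linear_iff by simp_all
  have "(f has_derivative (\<lambda>x. k * x)) (at (snd (X, t)) within snd ` S)"
    using has_derivative_subset[OF f[unfolded has_field_derivative_def] \<open>snd ` S \<subseteq> T\<close>] by simp
  from has_derivative_in_compose[OF has_derivative_snd[OF has_derivative_ident] this]
  have "((\<lambda>v::('a \<times> 'b) \<times> real. f (snd v)) has_derivative (\<lambda>v. k * snd v)) (at (X, t) within S)"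
    by simp
  from has_derivative_Pair[OF has_derivative_Pair[OF
        has_derivative_add_const[OF bounded_linear_imp_has_derivative[OF A]]
        has_derivative_add_const[OF bounded_linear_imp_has_derivative[OF B]]] this]
  show ?thesis unfolding block_map_def[abs_def] .
qed

lemma zero_in_unit_cube: "0 \<in> cbox 0 (One :: 'a::euclidean_space)"
  by (simp add: mem_box inner_Basis inner_sum_left sum_nonneg)

lemma coded_fixed_point:
  assumes "\<Phi> ` \<Gamma> = \<Gamma>" "inj_on \<pi> \<Gamma>" "\<forall>X\<in>\<Gamma>. \<pi> (\<Phi> X) = shift (\<pi> X)"
    and "\<forall>i\<in>{0,1}. \<Gamma> \<inter> Chat i = {X\<in>\<Gamma>. \<pi> X 0 = i}"
    and "\<theta> \<in> \<Gamma>" "\<pi> \<theta> = (\<lambda>n. 0)"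
  shows "\<Phi> \<theta> = \<theta>" "\<theta> \<in> Chat 0" "\<theta> \<notin> Chat 1"
proof -
  have "\<Phi> \<theta> \<in> \<Gamma>" using assms(1,5) by blast
  moreover have "\<pi> (\<Phi> \<theta>) = \<pi> \<theta>" using assms(3,5,6) by (simp add: shift_def)
  ultimately show "\<Phi> \<theta> = \<theta>" using inj_onD[OF assms(2)] assms(5) by blast
  have Chat0: "\<Gamma> \<inter> Chat 0 = {X\<in>\<Gamma>. \<pi> X 0 = 0}" and Chat1: "\<Gamma> \<inter> Chat 1 = {X\<in>\<Gamma>. \<pi> X 0 = 1}"
    using bspec[OF assms(4), of 0] bspec[OF assms(4), of 1] by simp_all
  have "\<theta> \<in> {X\<in>\<Gamma>. \<pi> X 0 = 0}" using assms(5,6) by simp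
  then show "\<theta> \<in> Chat 0" unfolding Chat0[symmetric] by blast
  show "\<theta> \<notin> Chat 1"
  proof
    assume "\<theta> \<in> Chat 1"
    then have "\<theta> \<in> \<Gamma> \<inter> Chat 1" using assms(5) by blast
    then have "\<pi> \<theta> 0 = 1" unfolding Chat1 by simp
    then show False using assms(6) by simp
  qed
qed

(* The horseshoe enters the argument only through its fixed point \<theta> = 0, which lies in
   \<open>Chat 0\<close> but not in \<open>Chat 1\<close>, and through the local invariant manifolds of \<theta>. *)

locale skew_product =
  fixes f0 f0' f1 :: "real \<Rightarrow> real" and \<beta> lam \<mu>s \<mu>u :: real
    and \<Phi> :: "'a::euclidean_space \<times> 'b::euclidean_space \<Rightarrow> 'a \<times> 'b"
    and Chat :: "nat \<Rightarrow> ('a \<times> 'b) set"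
    and p q :: "nat \<Rightarrow> 'b" and c d :: "nat \<Rightarrow> 'a"
    and A :: "nat \<Rightarrow> 'a \<Rightarrow> 'a" and B :: "nat \<Rightarrow> 'b \<Rightarrow> 'b"
    and cA :: "nat \<Rightarrow> 'a" and cB :: "nat \<Rightarrow> 'b"
    and F :: "('a \<times> 'b) \<times> real \<Rightarrow> ('a \<times> 'b) \<times> real"
  assumes f0_deriv: "\<forall>x\<in>{0..1}. (f0 has_real_derivative f0' x) (at x within {0..1})"
    and f0_maps: "f0 ` {0..1} \<subseteq> {0..1}"
    and f0_fixed_points: "{x\<in>{0..1}. f0 x = x} = {0, 1}"
    and f0'_0: "f0' 0 = \<beta>" and beta_gt_1: "\<beta> > 1"
    and f0'_1: "f0' 1 = lam" and lam_lt_1: "lam < 1"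
    and f1_1: "f1 1 = 0"
    and Phi_continuous: "continuous_on UNIV \<Phi>"
    and Phi_inj: "inj \<Phi>" and inv_Phi_continuous: "continuous_on UNIV (inv \<Phi>)"
    and Phi_0: "\<Phi> 0 = 0" and zero_in_Chat0: "0 \<in> Chat 0" and zero_notin_Chat1: "0 \<notin> Chat 1"
    and Chat: "\<forall>i\<in>{0,1}. Chat i = cbox 0 One \<times> cbox (p i) (q i)"
    and Chat1_cube: "cbox (p 1) (q 1) \<subseteq> cbox 0 One"
    and linear_AB: "\<forall>i\<in>{0,1}. linear (A i) \<and> linear (B i)"
    and Phi_affine: "\<forall>i\<in>{0,1}. \<forall>x y. (x, y) \<in> Chat i \<longrightarrow> \<Phi> (x, y) = (A i x + cA i, B i y + cB i)"
    and Phi_Chat: "\<forall>i\<in>{0,1}. \<Phi> ` Chat i = cbox (c i) (d i) \<times> cbox 0 One"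
    and Phi_Chat_cube: "\<forall>i\<in>{0,1}. cbox (c i) (d i) \<subseteq> cbox 0 One \<and> cbox (c i) (d i) \<noteq> {}"
    and mus_pos: "0 < \<mu>s" and mus_lt_lam: "\<mu>s < lam" and muu_gt_beta: "\<mu>u > \<beta>"
    and A_contracts: "\<forall>i\<in>{0,1}. \<forall>x. norm (A i x) \<le> \<mu>s * norm x"
    and B_expands: "\<forall>i\<in>{0,1}. \<forall>y. norm (B i y) \<ge> \<mu>u * norm y"
    and local_stable_theta: "local_stable_manifold \<Phi> (cbox 0 One) 0 = cbox 0 One \<times> {0}"
    and local_unstable_theta: "local_unstable_manifold \<Phi> (cbox 0 One) 0 = {0} \<times> cbox 0 One"
    and F_Chat0: "\<forall>X\<in>Chat 0. \<forall>x\<in>{0..1}. F (X, x) = (\<Phi> X, f0 x)"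
    and F_Chat1: "\<forall>X\<in>Chat 1. \<forall>x\<in>{0..1}. F (X, x) = (\<Phi> X, f1 x)"
begin

abbreviation C :: "(('a \<times> 'b) \<times> real) set" where
  "C \<equiv> (Chat 0 \<union> Chat 1) \<times> {0..1}"

lemma Chat_0: "Chat 0 = cbox 0 One \<times> cbox (p 0) (q 0)"
  and Chat_1: "Chat 1 = cbox 0 One \<times> cbox (p 1) (q 1)"
  and Phi_Chat_0: "\<Phi> ` Chat 0 = cbox (c 0) (d 0) \<times> cbox 0 One"
  and Phi_Chat_1: "\<Phi> ` Chat 1 = cbox (c 1) (d 1) \<times> cbox 0 One"
  using Chat Phi_Chat by simp_all

lemma F_Chat0_eq: "X \<in> Chat 0 \<Longrightarrow> x \<in> {0..1} \<Longrightarrow> F (X, x) = (\<Phi> X, f0 x)"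
  and F_Chat1_eq: "X \<in> Chat 1 \<Longrightarrow> x \<in> {0..1} \<Longrightarrow> F (X, x) = (\<Phi> X, f1 x)"
  and Phi_affine_eq: "i \<in> {0, 1} \<Longrightarrow> (u, v) \<in> Chat i \<Longrightarrow> \<Phi> (u, v) = (A i u + cA i, B i v + cB i)"
  using F_Chat0 F_Chat1 Phi_affine by blast+

lemma f0_0: "f0 0 = 0" and f0_1: "f0 1 = 1"
proof -
  have "0 \<in> {x\<in>{0..1}. f0 x = x}" "1 \<in> {x\<in>{0..1}. f0 x = x}"
    unfolding f0_fixed_points by simp_all
  then show "f0 0 = 0" "f0 1 = 1" by simp_all
qed

lemma f0_continuous: "continuous_on {0..1} f0"
  using f0_deriv DERIV_continuous continuous_on_eq_continuous_within by blast

lemma linear_A0: "linear (A 0)" and linear_B0: "linear (B 0)" and linear_A1: "linear (A 1)"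
  using linear_AB by simp_all

lemma Phi_Chat0_affine: "(x, y) \<in> Chat 0 \<Longrightarrow> \<Phi> (x, y) = (A 0 x, B 0 y)"
proof -
  have "(0, 0) \<in> Chat 0" using zero_in_Chat0 by (simp add: zero_prod_def)
  then have "\<Phi> (0, 0) = (cA 0, cB 0)"
    using Phi_affine_eq[of 0] linear_A0 linear_B0 by (simp add: linear_0)
  then have "cA 0 = 0" "cB 0 = 0" using Phi_0 by (simp_all add: zero_prod_def)
  then show "(x, y) \<in> Chat 0 \<Longrightarrow> \<Phi> (x, y) = (A 0 x, B 0 y)"
    using Phi_affine_eq[of 0 x y] by simp
qed

lemma funpow_f0_in_unit_interval: "x \<in> {0..1} \<Longrightarrow> (f0 ^^ n) x \<in> {0..1}"
  by (induction n) (use f0_maps in \<open>auto simp: image_subset_iff\<close>)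

lemma F_center: "t \<in> {0..1} \<Longrightarrow> F (0, t) = (0, f0 t)"
  using F_Chat0_eq[OF zero_in_Chat0] Phi_0 by simp

lemma funpow_F_center:
  assumes "x \<in> {0..1}"
  shows "(F ^^ n) (0, x) = (0, (f0 ^^ n) x)"
  using funpow_f0_in_unit_interval[OF assms] by (induction n) (simp_all add: F_center)

text \<open>Near the fibre over \<theta> the map F is the product of the linear part of \<Phi> on
  \<open>Chat 0\<close> with f0, because \<theta> lies at positive distance from the closed cube \<open>Chat 1\<close>.\<close>

lemma F_has_derivative_center:
  assumes "t \<in> {0..1}"
  shows "(F has_derivative block_map (A 0) (B 0) (f0' t)) (at (0, t) within C)"
proof -
  have "open (- Chat 1)" unfolding Chat_1 by (simp add: open_Compl closed_Times closed_cbox)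
  then obtain e where "e > 0" and e_ball: "ball 0 e \<subseteq> - Chat 1"
    using zero_notin_Chat1 open_contains_ball_eq by blast
  have local_form: "((A 0 (fst (fst v)) + 0, B 0 (snd (fst v)) + 0), f0 (snd v)) = F v"
    if "v \<in> C" "dist v (0, t) < e" for v
  proof -
    have "dist (fst v) 0 < e" using dist_fst_le[of v "(0, t)"] that(2) by simp
    then have "fst v \<notin> Chat 1" using e_ball by (auto simp: dist_commute)
    then have "fst v \<in> Chat 0" "snd v \<in> {0..1}" using that(1) by auto
    then have "F v = (\<Phi> (fst v), f0 (snd v))" using F_Chat0_eq by (metis prod.collapse)
    also have "\<Phi> (fst v) = (A 0 (fst (fst v)), B 0 (snd (fst v)))"
      using Phi_Chat0_affine \<open>fst v \<in> Chat 0\<close> by (metis prod.collapse)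
    finally show ?thesis by simp
  qed
  have "(0, t) \<in> C" using zero_in_Chat0 assms by simp
  have "snd ` C \<subseteq> {0..1}" by auto
  from has_derivative_affine_skew_product[OF linear_A0 linear_B0 f0_deriv[rule_format, OF assms] this,
      where a = 0 and b = 0 and X = 0]
  show ?thesis
    using \<open>(0, t) \<in> C\<close> local_form by (rule has_derivative_transform_within[OF _ \<open>e > 0\<close>])
qed

lemma saddle_P: "saddle_of_index F C (0, 1) DIM('b)"
proof -
  have "hyperbolic_linear_index (block_map (A 0) (B 0) lam) DIM('b)"
    using A_contracts B_expands mus_pos mus_lt_lam lam_lt_1 beta_gt_1 muu_gt_beta
    by (intro hyperbolic_block_map_center_stable[OF linear_A0 linear_B0, where ms = \<mu>s and mu = \<mu>u]) auto
  then show ?thesis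
    unfolding saddle_of_index_def
    using F_has_derivative_center[of 1] f0'_1 F_center[of 1] f0_1 zero_in_Chat0 by auto
qed

lemma saddle_Q: "saddle_of_index F C (0, 0) (DIM('b) + 1)"
proof -
  have "hyperbolic_linear_index (block_map (A 0) (B 0) \<beta>) (DIM('b) + 1)"
    using A_contracts B_expands mus_pos mus_lt_lam lam_lt_1 beta_gt_1 muu_gt_beta
    by (intro hyperbolic_block_map_center_unstable[OF linear_A0 linear_B0, where ms = \<mu>s and mu = \<mu>u]) auto
  then show ?thesis
    unfolding saddle_of_index_def
    using F_has_derivative_center[of 0] f0'_0 F_center[of 0] f0_0 zero_in_Chat0 by auto
qed

lemma stable_P_unstable_Q_intersect: "stable_set F C (0, 1) \<inter> unstable_set F C (0, 0) \<noteq> {}"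
proof -
  have "(f0 has_real_derivative \<beta>) (at 0 within {0..1})" using f0_deriv f0'_0 by auto
  then have above: "z < f0 z" if "0 < z" "z < 1" for z
    using interval_map_above_diagonal[OF f0_continuous f0_fixed_points _ beta_gt_1 that] by blast
  define x :: real where "x = 1 / 2"
  have x: "0 < x" "x < 1" by (simp_all add: x_def)
  obtain g where g: "g 0 = x" "\<And>n. g n \<in> {0<..x}" "\<And>n. f0 (g (Suc n)) = g n" "g \<longlonglongrightarrow> 0"
    using backward_orbit_tendsto_zero[OF f0_continuous f0_0 above x] by blast
  have "(\<lambda>n. (f0 ^^ n) x) \<longlonglongrightarrow> 1"
    using forward_orbit_tendsto_one(2)[OF f0_continuous f0_maps f0_1 above] x by simp
  have orbit: "(F ^^ n) (0, x) = (0, (f0 ^^ n) x)" for n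
    using funpow_F_center x by simp
  have "(0, x) \<in> stable_set F C (0, 1)"
    unfolding stable_set_def
  proof (intro CollectI conjI allI)
    show "(F ^^ n) (0, x) \<in> C" for n
      using funpow_f0_in_unit_interval[of x n] x zero_in_Chat0 by (simp add: orbit)
    show "(\<lambda>n. (F ^^ n) (0, x)) \<longlonglongrightarrow> (0, 1)"
      unfolding orbit by (intro tendsto_Pair tendsto_const \<open>(\<lambda>n. (f0 ^^ n) x) \<longlonglongrightarrow> 1\<close>)
  qed
  moreover have "(0, x) \<in> unstable_set F C (0, 0)"
    unfolding unstable_set_def
  proof (intro CollectI exI[of _ "\<lambda>n. (0, g n)"] conjI allI)
    fix n
    have "g n \<in> {0..1}" "g (Suc n) \<in> {0..1}" using g(2)[of n] g(2)[of "Suc n"] x by auto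
    then show "(0, g n) \<in> C" using zero_in_Chat0 by simp
    show "F (0, g (Suc n)) = (0, g n)" using \<open>g (Suc n) \<in> {0..1}\<close> F_center g(3) by simp
  qed (simp_all add: g(1) tendsto_Pair g(4))
  ultimately show ?thesis by blast
qed

lemma local_stable_manifold_in_stable_set_Q:
  assumes "X \<in> local_stable_manifold \<Phi> (cbox 0 One) 0"
  shows "(X, 0) \<in> stable_set F C (0, 0)"
proof -
  let ?W = "local_stable_manifold \<Phi> (cbox 0 One) 0"
  have orbit: "(\<Phi> ^^ n) X \<in> ?W" for n
  proof (induction n)
    case (Suc n)
    then have "\<Phi> ((\<Phi> ^^ n) X) \<in> ?W"
      using image_local_stable_manifold_subset[OF Phi_continuous Phi_0] by blast
    then show ?case by simp
  qed (simp add: assms)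
  have "0 \<in> cbox (p 0) (q 0)" using zero_in_Chat0 by (simp add: Chat_0 zero_prod_def)
  then have W_Chat0: "?W \<subseteq> Chat 0" by (auto simp: local_stable_theta Chat_0)
  have F_orbit: "(F ^^ n) (X, 0) = ((\<Phi> ^^ n) X, 0)" for n
  proof (induction n)
    case (Suc n)
    have "(\<Phi> ^^ n) X \<in> Chat 0" using orbit W_Chat0 by blast
    then show ?case using Suc F_Chat0_eq f0_0 by simp
  qed simp
  have "X \<in> stable_set \<Phi> (cbox 0 One) 0"
    using assms connected_component_subset unfolding local_stable_manifold_def by blast
  then have "(\<lambda>n. (\<Phi> ^^ n) X) \<longlonglongrightarrow> 0" by (simp add: stable_set_def)
  show ?thesis
    unfolding stable_set_def
  proof (intro CollectI conjI allI)
    show "(F ^^ n) (X, 0) \<in> C" for n using orbit[of n] W_Chat0 by (auto simp: F_orbit)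
    show "(\<lambda>n. (F ^^ n) (X, 0)) \<longlonglongrightarrow> (0, 0)"
      unfolding F_orbit by (intro tendsto_Pair tendsto_const \<open>(\<lambda>n. (\<Phi> ^^ n) X) \<longlonglongrightarrow> 0\<close>)
  qed
qed

lemma local_unstable_manifold_in_unstable_set_P:
  assumes "X \<in> local_unstable_manifold \<Phi> (cbox 0 One) 0" "X \<in> Chat 0 \<union> Chat 1"
  shows "(X, 1) \<in> unstable_set F C (0, 1)"
proof -
  let ?W = "local_unstable_manifold \<Phi> (cbox 0 One) 0"
  define \<xi> where "\<xi> n = (inv \<Phi> ^^ n) X" for n
  have \<xi>_W: "\<xi> n \<in> ?W" for n
  proof (induction n)
    case (Suc n)
    then have "inv \<Phi> (\<xi> n) \<in> ?W"
      using inv_image_local_unstable_manifold_subset[OF Phi_inj inv_Phi_continuous Phi_0] by blast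
    then show ?case by (simp add: \<xi>_def)
  qed (simp add: \<xi>_def assms(1))
  have "\<Phi> 0 \<in> \<Phi> ` Chat 0" using zero_in_Chat0 by (rule imageI)
  then have "0 \<in> cbox (c 0) (d 0) \<times> cbox (0::'b) One" unfolding Phi_0 Phi_Chat_0 .
  then have "0 \<in> cbox (c 0) (d 0)" by (simp add: mem_Times_iff)
  then have "{0} \<times> cbox 0 One \<subseteq> cbox (c 0) (d 0) \<times> cbox (0::'b) One"
    by (intro Sigma_mono) simp_all
  then have W_image: "?W \<subseteq> \<Phi> ` Chat 0" by (simp only: local_unstable_theta Phi_Chat_0)
  have \<xi>_Suc: "\<xi> (Suc n) \<in> Chat 0 \<and> \<Phi> (\<xi> (Suc n)) = \<xi> n" for n
  proof -
    have "\<xi> n \<in> \<Phi> ` Chat 0" using W_image \<xi>_W[of n] by (rule subsetD)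
    then obtain Y where Y: "Y \<in> Chat 0" "\<xi> n = \<Phi> Y" by (rule imageE)
    have "\<xi> (Suc n) = inv \<Phi> (\<xi> n)" by (simp add: \<xi>_def)
    also have "\<dots> = Y" unfolding Y(2) using Phi_inj by (rule inv_f_f)
    finally show ?thesis using Y by simp
  qed
  have "X \<in> unstable_set \<Phi> (cbox 0 One) 0"
    using assms(1) connected_component_subset unfolding local_unstable_manifold_def by blast
  then have "\<xi> \<longlonglongrightarrow> 0"
    using unstable_set_funpow_inv_tendsto[OF Phi_inj] by (simp add: \<xi>_def[abs_def])
  show ?thesis
    unfolding unstable_set_def
  proof (intro CollectI exI[of _ "\<lambda>n. (\<xi> n, 1)"] conjI allI)
    fix n
    show "(\<xi> n, 1) \<in> C"
    proof (cases n)
      case 0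
      then show ?thesis using assms(2) by (simp add: \<xi>_def)
    next
      case (Suc m)
      then show ?thesis using \<xi>_Suc[of m] by simp
    qed
    show "F (\<xi> (Suc n), 1) = (\<xi> n, 1)" using \<xi>_Suc[of n] F_Chat0_eq f0_1 by simp
  next
    show "(\<lambda>n. (\<xi> n, 1::real)) \<longlonglongrightarrow> (0, 1)"
      by (intro tendsto_Pair tendsto_const \<open>\<xi> \<longlonglongrightarrow> 0\<close>)
  qed (simp add: \<xi>_def)
qed

lemma unstable_P_stable_Q_intersect: "unstable_set F C (0, 1) \<inter> stable_set F C (0, 0) \<noteq> {}"
proof -
  obtain z where "z \<in> cbox (c 1) (d 1)" using Phi_Chat_cube by auto
  then have "(z, 0) \<in> \<Phi> ` Chat 1" unfolding Phi_Chat_1 using zero_in_unit_cube by simp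
  then obtain W where W: "W \<in> Chat 1" "(z, 0) = \<Phi> W" by (rule imageE)
  obtain x y where xy: "W = (x, y)" by (cases W)
  have y: "y \<in> cbox (p 1) (q 1)" using W(1) unfolding xy Chat_1 by simp
  have "B 1 y + cB 1 = 0" using Phi_affine_eq[of 1 x y] W by (simp add: xy prod_eq_iff)
  define X :: "'a \<times> 'b" where "X = (0, y)"
  have "X \<in> Chat 1" unfolding X_def Chat_1 using y zero_in_unit_cube by simp
  then have "\<Phi> X = (cA 1, 0)"
    using Phi_affine_eq[of 1 0 y] \<open>B 1 y + cB 1 = 0\<close> linear_A1 by (simp add: X_def linear_0)
  moreover have "\<Phi> X \<in> cbox (c 1) (d 1) \<times> cbox 0 One"
    using \<open>X \<in> Chat 1\<close> Phi_Chat_1 by blast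
  ultimately have "\<Phi> X \<in> local_stable_manifold \<Phi> (cbox 0 One) 0"
    using Phi_Chat_cube by (auto simp: local_stable_theta)
  then have "(\<Phi> X, 0) \<in> stable_set F C (0, 0)" by (rule local_stable_manifold_in_stable_set_Q)
  moreover have "F (X, 1) = (\<Phi> X, 0)" using F_Chat1_eq[OF \<open>X \<in> Chat 1\<close>, of 1] f1_1 by simp
  moreover have "(X, 1) \<in> C" using \<open>X \<in> Chat 1\<close> by simp
  ultimately have stable: "(X, 1) \<in> stable_set F C (0, 0)" using stable_set_preimage by metis
  have "X \<in> local_unstable_manifold \<Phi> (cbox 0 One) 0"
    using y Chat1_cube unfolding X_def local_unstable_theta by auto
  then have "(X, 1) \<in> unstable_set F C (0, 1)"
    using \<open>X \<in> Chat 1\<close> by (intro local_unstable_manifold_in_unstable_set_P) auto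
  with stable show ?thesis by blast
qed

end

theorem lemma2p6:
  fixes f0 f1 f0' f1' :: "real \<Rightarrow> real"
    and \<beta> lam \<alpha> \<alpha>bar \<gamma> \<gamma>' a0 b0 a1 b1 :: real and N :: nat
    and \<Phi> :: "(real^('s::finite)) \<times> (real^('u::finite)) \<Rightarrow> (real^'s) \<times> (real^'u)"
    and D\<Phi> D\<Phi>inv :: "(real^'s) \<times> (real^'u) \<Rightarrow> ((real^'s) \<times> (real^'u)) \<Rightarrow>\<^sub>L ((real^'s) \<times> (real^'u))"
    and \<Gamma> :: "((real^'s) \<times> (real^'u)) set"
    and \<pi> :: "(real^'s) \<times> (real^'u) \<Rightarrow> (int \<Rightarrow> nat)"
    and Chat :: "nat \<Rightarrow> ((real^'s) \<times> (real^'u)) set"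
    and p q :: "nat \<Rightarrow> real^'u" and c d :: "nat \<Rightarrow> real^'s"
    and A :: "nat \<Rightarrow> real^'s \<Rightarrow> real^'s" and B :: "nat \<Rightarrow> real^'u \<Rightarrow> real^'u"
    and cA :: "nat \<Rightarrow> real^'s" and cB :: "nat \<Rightarrow> real^'u"
    and \<mu>s \<mu>u :: real
    and F :: "((real^'s) \<times> (real^'u)) \<times> real \<Rightarrow> ((real^'s) \<times> (real^'u)) \<times> real"
  assumes
    \<comment> \<open>f0, f1 are C^1 injective maps of [0,1] into [0,1]\<close>
    f0_C1: "\<forall>x\<in>{0..1}. (f0 has_real_derivative f0' x) (at x within {0..1})" "continuous_on {0..1} f0'"
    and f1_C1: "\<forall>x\<in>{0..1}. (f1 has_real_derivative f1' x) (at x within {0..1})" "continuous_on {0..1} f1'"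
    and f0_maps: "f0 ` {0..1} \<subseteq> {0..1}" "inj_on f0 {0..1}"
    and f1_maps: "f1 ` {0..1} \<subseteq> {0..1}" "inj_on f1 {0..1}"
    \<comment> \<open>(F0.i)\<close>
    and F0i: "strict_mono_on {0..1} f0" "{x\<in>{0..1}. f0 x = x} = {0, 1}"
      "f0' 0 = \<beta>" "\<beta> > 1" "f0' 1 = lam" "0 < lam" "lam < 1"
      "\<forall>x\<in>{0..1}. lam \<le> f0' x \<and> f0' x \<le> \<beta>"
    \<comment> \<open>(F0.ii)\<close>
    and F0ii: "0 < a0" "a0 \<le> b0" "b0 < 1" "b0 = f0 a0"
      "0 \<le> a1" "a1 \<le> b1" "b1 \<le> 1" "b1 = f0 a1"
      "\<alpha> > 1" "N \<ge> 1" "(f0 ^^ N) ` {a0..b0} = {a1..b1}"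
      "\<forall>x\<in>{a0..b0}. lam * (\<Prod>k<N. f0' ((f0 ^^ k) x)) > \<alpha>"
      "\<forall>x\<in>{0..b0}. f0' x > 1" "\<forall>x\<in>{a1..1}. f0' x < 1"
    \<comment> \<open>(F1.i)\<close>
    and F1i: "\<forall>x\<in>{0..1}. \<forall>y\<in>{0..1}. x < y \<longrightarrow> f1 y < f1 x"
      "\<gamma>' = (INF x\<in>{0..1}. \<bar>f1' x\<bar>)" "\<gamma> = (SUP x\<in>{0..1}. \<bar>f1' x\<bar>)" "\<gamma>' \<le> \<gamma>" "\<gamma> < 1"
    \<comment> \<open>(F1.ii)\<close>
    and F1ii: "\<alpha>bar > 1 / \<alpha>" "\<forall>x\<in>{f1 (f1 a1)..a1}. \<bar>f1' x\<bar> \<ge> \<alpha>bar"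
    \<comment> \<open>(F01)\<close>
    and F01: "f1 1 = 0" "f1 ` {a1..1} \<subseteq> {0..<a0}"
      "{0..< inv_into {0..1} f0 (inv_into {0..1} f0 b0)} \<subseteq> f1 ` {0..1}"
    \<comment> \<open>\<Phi> is a C^1 diffeomorphism of R^(s+u)\<close>
    and \<Phi>_diffeo: "bij \<Phi>"
      "\<forall>z. (\<Phi> has_derivative blinfun_apply (D\<Phi> z)) (at z)" "continuous_on UNIV D\<Phi>"
      "\<forall>z. (inv \<Phi> has_derivative blinfun_apply (D\<Phi>inv z)) (at z)" "continuous_on UNIV D\<Phi>inv"
    \<comment> \<open>sub-cubes \<open>Chat 0\<close>, \<open>Chat 1\<close>: full in the stable direction, thin in the unstable one\<close>
    and cubes: "\<forall>i\<in>{0,1}. Chat i = cbox 0 One \<times> cbox (p i) (q i)"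
      "\<forall>i\<in>{0,1}. \<forall>j. 0 \<le> p i $ j \<and> p i $ j < q i $ j \<and> q i $ j \<le> 1"
      "cbox (p 0) (q 0) \<inter> cbox (p 1) (q 1) = {}"
    \<comment> \<open>\<Phi> is affine on each sub-cube, respecting the stable/unstable coordinates\<close>
    and affine: "\<forall>i\<in>{0,1}. linear (A i) \<and> linear (B i)"
      "\<forall>i\<in>{0,1}. \<forall>x y. (x, y) \<in> Chat i \<longrightarrow> \<Phi> (x, y) = (A i x + cA i, B i y + cB i)"
    \<comment> \<open>Markov property: the image of each sub-cube crosses the cube fully in the unstable direction\<close>
    and markov: "\<forall>i\<in>{0,1}. \<Phi> ` Chat i = cbox (c i) (d i) \<times> cbox 0 One"
      "\<forall>i\<in>{0,1}. cbox (c i) (d i) \<subseteq> cbox 0 One \<and> cbox (c i) (d i) \<noteq> {}"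
      "cbox (c 0) (d 0) \<inter> cbox (c 1) (d 1) = {}"
    \<comment> \<open>domination: unstable expansion stronger than \<beta>, stable contraction stronger than min lam \<gamma>'\<close>
    and domination: "0 < \<mu>s" "\<mu>s < min lam \<gamma>'" "\<mu>u > \<beta>"
      "\<forall>i\<in>{0,1}. \<forall>x. norm (A i x) \<le> \<mu>s * norm x"
      "\<forall>i\<in>{0,1}. \<forall>y. norm (B i y) \<ge> \<mu>u * norm y"
    \<comment> \<open>the horseshoe \<Gamma> and its conjugacy \<pi> with the shift\<close>
    and horseshoe: "\<Gamma> \<subseteq> cbox 0 One" "compact \<Gamma>" "\<Phi> ` \<Gamma> = \<Gamma>"
      "bij_betw \<pi> \<Gamma> Sigma2" "continuous_on \<Gamma> \<pi>" "continuous_on Sigma2 (inv_into \<Gamma> \<pi>)"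
      "\<forall>X\<in>\<Gamma>. \<pi> (\<Phi> X) = shift (\<pi> X)"
      "\<forall>i\<in>{0,1}. \<Gamma> \<inter> Chat i = {X\<in>\<Gamma>. \<pi> X 0 = i}"
    \<comment> \<open>\<theta> = \<pi>^-1(0^Z) = 0 and its local invariant manifolds\<close>
    and theta: "0 \<in> \<Gamma>" "\<pi> 0 = (\<lambda>n. 0)"
      "local_stable_manifold \<Phi> (cbox 0 One) 0 = cbox 0 One \<times> {0}"
      "local_unstable_manifold \<Phi> (cbox 0 One) 0 = {0} \<times> cbox 0 One"
    \<comment> \<open>the skew product F on C = Chat \<times> [0,1]\<close>
    and F_def: "\<forall>X\<in>Chat 0. \<forall>x\<in>{0..1}. F (X, x) = (\<Phi> X, f0 x)"
      "\<forall>X\<in>Chat 1. \<forall>x\<in>{0..1}. F (X, x) = (\<Phi> X, f1 x)"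
  shows
    "saddle_of_index F ((Chat 0 \<union> Chat 1) \<times> {0..1}) (0, 1) CARD('u)
     \<and> saddle_of_index F ((Chat 0 \<union> Chat 1) \<times> {0..1}) (0, 0) (CARD('u) + 1)
     \<and> stable_set F ((Chat 0 \<union> Chat 1) \<times> {0..1}) (0, 1)
         \<inter> unstable_set F ((Chat 0 \<union> Chat 1) \<times> {0..1}) (0, 0) \<noteq> {}
     \<and> unstable_set F ((Chat 0 \<union> Chat 1) \<times> {0..1}) (0, 1)
         \<inter> stable_set F ((Chat 0 \<union> Chat 1) \<times> {0..1}) (0, 0) \<noteq> {}"
proof -
  have theta_coded: "\<Phi> 0 = 0" "0 \<in> Chat 0" "0 \<notin> Chat 1"
    using coded_fixed_point[OF horseshoe(3) bij_betw_imp_inj_on[OF horseshoe(4)] horseshoe(7,8) theta(1,2)]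
    by simp_all
  have "cbox (p 1) (q 1) \<subseteq> cbox 0 One"
    using cubes(2) by (auto simp: subset_interval_cart Cart_1[symmetric])
  have "continuous_on UNIV \<Phi>" "continuous_on UNIV (inv \<Phi>)"
    using has_derivative_continuous[OF \<Phi>_diffeo(2)[rule_format]]
      has_derivative_continuous[OF \<Phi>_diffeo(4)[rule_format]]
    by (simp_all add: continuous_at_imp_continuous_on)
  have "\<mu>s < lam" using domination(2) by simp
  interpret skew_product f0 f0' f1 \<beta> lam \<mu>s \<mu>u \<Phi> Chat p q c d A B cA cB F
    by unfold_locales (fact f0_C1(1) f0_maps(1) F0i(2-5,7) F01(1) bij_is_inj[OF \<Phi>_diffeo(1)] theta_coded
        \<open>cbox (p 1) (q 1) \<subseteq> cbox 0 One\<close> \<open>continuous_on UNIV \<Phi>\<close> \<open>continuous_on UNIV (inv \<Phi>)\<close>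
        cubes(1) affine markov(1,2) domination(1,3-5) \<open>\<mu>s < lam\<close> theta(3,4) F_def)+
  show ?thesis
    using saddle_P saddle_Q stable_P_unstable_Q_intersect unstable_P_stable_Q_intersect by simp
qed

end
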